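(* Let $q$ be a prime power, $6\le n\le q$, $\alpha_1,\dots,\alpha_n\in\mathbb{F}_q$ distinct, $u_1,\dots,u_n\in\mathbb{F}_q^*$, and $H\in\mathbb{F}_q^{5\times n}$ with $H_{ab}=u_b\alpha_b^{a-1}$ (so $\ker H$ has distance $6$). Then the number of $e\in\mathbb{F}_q^n$ with $|e|=3$ for which there exists $e'\in\mathbb{F}_q^n$, $e'\ne e$, $|e'|\le 3$, $He'=He$, is at most $$\frac{(n-3)(n-4)(n-5)}{6(q-1)^2}\cdot(q-1)^3\binom{n}{3}.$$
   Context: $|e|$ denotes the Hamming weight of $e\in\mathbb{F}_q^n$. *)

theory Defs
  imports Complex_Main "HOL-Library.Cardinality"
begin

definition vecs :: "nat \<Rightarrow> (nat \<Rightarrow> 'a::zero) set" where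
  "vecs n = {e. \<forall>i. n \<le> i \<longrightarrow> e i = 0}"

definition hamming_weight :: "nat \<Rightarrow> (nat \<Rightarrow> 'a::zero) \<Rightarrow> nat" where
  "hamming_weight n e = card {i \<in> {0..<n}. e i \<noteq> 0}"

text \<open>Parity-check matrix H with H_{ab} = u_b alpha_b^(a-1), a = 1..5, b = 1..n;
  here rows and columns are 0-indexed, so row a (a < 5) has entries u b * alpha b ^ a.\<close>
definition gen_rs_H :: "nat \<Rightarrow> (nat \<Rightarrow> 'a::field) \<Rightarrow> (nat \<Rightarrow> 'a) \<Rightarrow> nat \<Rightarrow> nat \<Rightarrow> 'a" where
  "gen_rs_H n alpha u a b = u b * alpha b ^ a"

definition syndrome :: "nat \<Rightarrow> (nat \<Rightarrow> 'a::field) \<Rightarrow> (nat \<Rightarrow> 'a) \<Rightarrow> (nat \<Rightarrow> 'a) \<Rightarrow> nat \<Rightarrow> 'a" where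
  "syndrome n alpha u e a = (if a < 5 then (\<Sum>b<n. gen_rs_H n alpha u a b * e b) else 0)"

end

theory Submission
  imports Defs "HOL-Computational_Algebra.Polynomial"
begin

text \<open>Any five columns of the parity-check matrix form an invertible Vandermonde-type matrix,
  so two distinct vectors of weight at most 3 with equal syndromes have disjoint supports of size 3.
  A weight-3 vector e with such a partner e' is then determined by the two supports and the
  single value of e at the least index of its support: two candidates with the same data differ,
  after subtracting their partners, in at most 5 positions with zero syndrome difference.
  Counting the data gives C(n,3) C(n-3,3) (q-1), and 6 C(n-3,3) = (n-3)(n-4)(n-5).\<close>

lemma vandermonde_combination_zero:
  fixes alpha w :: "'b \<Rightarrow> 'a::field"
  assumes inj: "inj_on alpha F" and fin: "finite F" and card_F: "card F \<le> k"
    and sums: "\<forall>a<k. (\<Sum>b\<in>F. w b * alpha b ^ a) = 0"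
    and j: "j \<in> F"
  shows "w j = 0"
proof -
  define p where "p = (\<Prod>l\<in>F-{j}. [:- alpha l, 1:])"
  have "degree p \<le> card (F-{j})"
    using degree_prod_sum_le[of "F-{j}" "\<lambda>l. [:- alpha l, 1:]"] fin by (simp add: p_def o_def)
  also have "\<dots> < k" using card_F j fin card_gt_0_iff[of F] by (auto simp: card_Diff_singleton)
  finally have deg_p: "degree p < k" .
  have poly_p: "poly p x = (\<Prod>l\<in>F-{j}. x - alpha l)" for x
    unfolding p_def by (simp add: poly_prod)
  have "(\<Sum>b\<in>F. w b * poly p (alpha b))
      = (\<Sum>i\<le>degree p. coeff p i * (\<Sum>b\<in>F. w b * alpha b ^ i))"
    by (simp add: poly_altdef sum_distrib_left sum.swap[of _ F] algebra_simps)
  also have "\<dots> = 0" using sums deg_p by simp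
  finally have "(\<Sum>b\<in>F. w b * poly p (alpha b)) = 0" .
  moreover have "(\<Sum>b\<in>F. w b * poly p (alpha b)) = w j * poly p (alpha j)"
    using fin j by (subst sum.mono_neutral_right[of F "{j}"]) (auto simp: poly_p intro: prod_zero)
  moreover have "poly p (alpha j) \<noteq> 0"
    using inj j fin by (auto simp: poly_p inj_on_def)
  ultimately show ?thesis by simp
qed

lemma syndrome_diff:
  "syndrome n alpha u (\<lambda>i. e i - e' i) = (\<lambda>a. syndrome n alpha u e a - syndrome n alpha u e' a)"
  by (auto simp: syndrome_def right_diff_distrib sum_subtractf)

lemma syndrome_eq_imp_eq:
  fixes alpha u e e' :: "nat \<Rightarrow> 'a::field"
  assumes inj: "inj_on alpha {0..<n}" and u: "\<forall>i<n. u i \<noteq> 0"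
    and F: "F \<subseteq> {0..<n}" "card F \<le> 5"
    and agree: "\<forall>i. i \<notin> F \<longrightarrow> e i = e' i"
    and syn: "syndrome n alpha u e = syndrome n alpha u e'"
  shows "e = e'"
proof
  fix i
  show "e i = e' i"
  proof (cases "i \<in> F")
    case True
    have fin: "finite F" using F(1) finite_subset by blast
    have "\<forall>a<5. (\<Sum>b\<in>F. (u b * (e b - e' b)) * alpha b ^ a) = 0"
    proof (intro allI impI)
      fix a :: nat assume "a < 5"
      have "(\<Sum>b\<in>F. (u b * (e b - e' b)) * alpha b ^ a)
          = syndrome n alpha u (\<lambda>i. e i - e' i) a"
        using \<open>a < 5\<close> F(1) agree
        by (auto simp: syndrome_def gen_rs_H_def mult_ac intro!: sum.mono_neutral_cong_left)
      then show "(\<Sum>b\<in>F. (u b * (e b - e' b)) * alpha b ^ a) = 0"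
        by (simp add: syndrome_diff syn)
    qed
    then have "u i * (e i - e' i) = 0"
      by (rule vandermonde_combination_zero[OF inj_on_subset[OF inj F(1)] fin F(2) _ True])
    then show ?thesis using u True F(1) by auto
  qed (use agree in auto)
qed

definition support :: "nat \<Rightarrow> (nat \<Rightarrow> 'a::zero) \<Rightarrow> nat set" where
  "support n e = {i \<in> {0..<n}. e i \<noteq> 0}"

lemma support_subset: "support n e \<subseteq> {0..<n}"
  by (auto simp: support_def)

lemma finite_support: "finite (support n e)"
  using support_subset finite_subset by blast

lemma hamming_weight_eq_card_support: "hamming_weight n e = card (support n e)"
  by (simp add: hamming_weight_def support_def)

lemma vecs_zero_outside_support: "e \<in> vecs n \<Longrightarrow> i \<notin> support n e \<Longrightarrow> e i = 0"
  by (cases "i < n") (auto simp: vecs_def support_def)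

definition confusable :: "nat \<Rightarrow> (nat \<Rightarrow> 'a::field) \<Rightarrow> (nat \<Rightarrow> 'a) \<Rightarrow> (nat \<Rightarrow> 'a) \<Rightarrow> (nat \<Rightarrow> 'a) \<Rightarrow> bool"
  where "confusable n alpha u e e' \<longleftrightarrow> e' \<in> vecs n \<and> e' \<noteq> e \<and> hamming_weight n e' \<le> 3 \<and>
    syndrome n alpha u e' = syndrome n alpha u e"

lemma confusable_support:
  fixes alpha u e e' :: "nat \<Rightarrow> 'a::field"
  assumes inj: "inj_on alpha {0..<n}" and u: "\<forall>i<n. u i \<noteq> 0"
    and e: "e \<in> vecs n" "hamming_weight n e = 3"
    and conf: "confusable n alpha u e e'"
  shows "support n e \<inter> support n e' = {}" "card (support n e') = 3"
proof -
  let ?S = "support n e" and ?T = "support n e'"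
  have "\<not> card (?S \<union> ?T) \<le> 5"
  proof
    assume "card (?S \<union> ?T) \<le> 5"
    moreover have "\<forall>i. i \<notin> ?S \<union> ?T \<longrightarrow> e i = e' i"
      using vecs_zero_outside_support[OF e(1)] vecs_zero_outside_support[of e' n] conf
      by (auto simp: confusable_def)
    ultimately have "e = e'"
      using syndrome_eq_imp_eq[OF inj u, of "?S \<union> ?T" e e'] support_subset conf
      by (auto simp: confusable_def)
    then show False using conf by (simp add: confusable_def)
  qed
  moreover have "card ?S = 3" "card ?T \<le> 3"
    using e(2) conf by (auto simp: hamming_weight_eq_card_support confusable_def)
  moreover have "card ?S + card ?T = card (?S \<union> ?T) + card (?S \<inter> ?T)"
    by (rule card_Un_Int) (rule finite_support)+
  ultimately have "card (?S \<inter> ?T) = 0" "card ?T = 3" by linarith+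
  then show "?S \<inter> ?T = {}" "card ?T = 3"
    using finite_support[of n e] by auto
qed

lemma confusable_eqI:
  fixes alpha u e1 e2 e1' e2' :: "nat \<Rightarrow> 'a::field"
  assumes inj: "inj_on alpha {0..<n}" and u: "\<forall>i<n. u i \<noteq> 0"
    and e1: "e1 \<in> vecs n" "hamming_weight n e1 = 3" "confusable n alpha u e1 e1'"
    and e2: "e2 \<in> vecs n" "hamming_weight n e2 = 3" "confusable n alpha u e2 e2'"
    and same_supports: "support n e2 = support n e1" "support n e2' = support n e1'"
    and m: "m \<in> support n e1" "e1 m = e2 m"
  shows "e1 = e2"
proof -
  let ?S = "support n e1" and ?T = "support n e1'"
  have v': "e1' \<in> vecs n" "e2' \<in> vecs n" using e1(3) e2(3) by (auto simp: confusable_def)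
  note zero = vecs_zero_outside_support
  have disj: "?S \<inter> ?T = {}" and card_T: "card ?T = 3"
    using confusable_support[OF inj u e1] by auto
  have partners_vanish: "e1' i = 0" "e2' i = 0" if "i \<in> ?S" for i
    using that disj same_supports zero[OF v'(1)] zero[OF v'(2)] by auto
  have "(\<lambda>i. e1 i - e1' i) = (\<lambda>i. e2 i - e2' i)"
  proof (rule syndrome_eq_imp_eq[OF inj u, where F = "(?S \<union> ?T) - {m}"])
    show "(?S \<union> ?T) - {m} \<subseteq> {0..<n}" using support_subset by blast
    have "card (?S \<union> ?T) \<le> 6"
      using card_Un_le[of ?S ?T] card_T e1(2) by (simp add: hamming_weight_eq_card_support)
    then show "card ((?S \<union> ?T) - {m}) \<le> 5"
      using m(1) finite_support by (simp add: card_Diff_singleton)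
    show "\<forall>i. i \<notin> (?S \<union> ?T) - {m} \<longrightarrow> e1 i - e1' i = e2 i - e2' i"
      using m partners_vanish same_supports zero[OF e1(1)] zero[OF e2(1)] zero[OF v'(1)] zero[OF v'(2)]
      by (metis DiffI UnCI singletonD)
    show "syndrome n alpha u (\<lambda>i. e1 i - e1' i) = syndrome n alpha u (\<lambda>i. e2 i - e2' i)"
      using e1(3) e2(3) by (simp add: syndrome_diff confusable_def)
  qed
  then have "e1 i = e2 i" if "i \<in> ?S" for i
    using partners_vanish[OF that] by (metis diff_zero)
  moreover have "e1 i = e2 i" if "i \<notin> ?S" for i
    using that same_supports zero[OF e1(1)] zero[OF e2(1)] by metis
  ultimately show "e1 = e2" by blast
qed

lemma six_times_choose_three: "6 * (m choose 3) = m * (m - 1) * (m - 2)"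
proof -
  have "3 * (m choose 3) = m * ((m - 1) choose 2)"
    using times_binomial_minus1_eq[of 3 m] by simp
  moreover have "2 * ((m - 1) choose 2) = (m - 1) * (m - 2)"
    using times_binomial_minus1_eq[of 2 "m - 1"] by (simp add: numeral_2_eq_2)
  ultimately show ?thesis by (metis mult.assoc mult.left_commute mult_2 numeral_Bit0)
qed

lemma card_disjoint_subset_pairs:
  assumes "finite A"
  shows "card {(S, T). S \<subseteq> A \<and> card S = k \<and> T \<subseteq> A - S \<and> card T = l}
    = (card A choose k) * ((card A - k) choose l)"
proof -
  have "{(S, T). S \<subseteq> A \<and> card S = k \<and> T \<subseteq> A - S \<and> card T = l}
      = Sigma {S. S \<subseteq> A \<and> card S = k} (\<lambda>S. {T. T \<subseteq> A - S \<and> card T = l})"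
    by auto
  also have "card \<dots> = (\<Sum>S | S \<subseteq> A \<and> card S = k. (card A - k) choose l)"
  proof (subst card_SigmaI)
    show "(\<Sum>S | S \<subseteq> A \<and> card S = k. card {T. T \<subseteq> A - S \<and> card T = l})
        = (\<Sum>S | S \<subseteq> A \<and> card S = k. (card A - k) choose l)"
      using assms by (intro sum.cong) (auto simp: n_subsets card_Diff_subset finite_subset)
  qed (use assms in auto)
  also have "\<dots> = (card A choose k) * ((card A - k) choose l)"
    using assms by (simp add: n_subsets)
  finally show ?thesis .
qed

lemma card_nonzero: "card {x::'a::{finite,zero}. x \<noteq> 0} = CARD('a) - 1"
proof -
  have "{x::'a. x \<noteq> 0} = UNIV - {0}" by auto
  then show ?thesis by (simp add: card_Diff_singleton)
qed

lemma card_confusable_le: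
  fixes alpha u :: "nat \<Rightarrow> 'a::{finite,field}"
  assumes inj: "inj_on alpha {0..<n}" and u: "\<forall>i<n. u i \<noteq> 0"
  shows "card {e \<in> vecs n. hamming_weight n e = 3 \<and> (\<exists>e'. confusable n alpha u e e')}
    \<le> (n choose 3) * ((n - 3) choose 3) * (CARD('a) - 1)"
proof -
  let ?A = "{e \<in> vecs n. hamming_weight n e = 3 \<and> (\<exists>e'. confusable n alpha u e e')}"
  let ?pairs = "{(S, T). S \<subseteq> {0..<n} \<and> card S = 3 \<and> T \<subseteq> {0..<n} - S \<and> card T = 3}"
  define partner where "partner e = (SOME e'. confusable n alpha u e e')" for e
  define code where "code e = ((support n e, support n (partner e)), e (Min (support n e)))" for e
  have partner: "confusable n alpha u e (partner e)" if "e \<in> ?A" for e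
  proof -
    obtain e' where "confusable n alpha u e e'" using \<open>e \<in> ?A\<close> by blast
    then show ?thesis unfolding partner_def by (rule someI[of "confusable n alpha u e"])
  qed
  have min_in: "Min (support n e) \<in> support n e" if "e \<in> ?A" for e
  proof (rule Min_in[OF finite_support])
    show "support n e \<noteq> {}" using that by (auto simp: hamming_weight_eq_card_support)
  qed
  have "inj_on code ?A"
  proof (rule inj_onI)
    fix e1 e2 assume "e1 \<in> ?A" "e2 \<in> ?A" "code e1 = code e2"
    then show "e1 = e2"
      using confusable_eqI[OF inj u, of e1 "partner e1" e2 "partner e2" "Min (support n e1)"]
        partner min_in by (auto simp: code_def)
  qed
  moreover have "code ` ?A \<subseteq> ?pairs \<times> {x. x \<noteq> 0}"
  proof
    fix c assume "c \<in> code ` ?A"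
    then obtain e where e: "e \<in> ?A" and c: "c = code e" by blast
    have "e (Min (support n e)) \<noteq> 0" using min_in[OF e] by (simp add: support_def)
    then show "c \<in> ?pairs \<times> {x. x \<noteq> 0}"
      using confusable_support[OF inj u _ _ partner[OF e]] e support_subset[of n]
      by (auto simp: c code_def hamming_weight_eq_card_support)
  qed
  moreover have "finite (?pairs \<times> {x::'a. x \<noteq> 0})"
  proof (rule finite_cartesian_product)
    show "finite ?pairs" by (rule finite_subset[of _ "Pow {0..<n} \<times> Pow {0..<n}"]) auto
  qed simp
  ultimately have "card ?A \<le> card (?pairs \<times> {x::'a. x \<noteq> 0})"
    by (rule card_inj_on_le)
  also have "\<dots> = (n choose 3) * ((n - 3) choose 3) * (CARD('a) - 1)"
    using card_disjoint_subset_pairs[of "{0..<n}" 3 3] by (simp add: card_cartesian_product card_nonzero)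
  finally show ?thesis .
qed

lemma choose_bound_eq:
  assumes "1 < q"
  shows "real ((n choose 3) * ((n - 3) choose 3) * (q - 1))
    = real ((n - 3) * (n - 4) * (n - 5)) / (6 * (real q - 1)^2) * (real q - 1)^3 * real (n choose 3)"
proof -
  define x where "x = real q - 1"
  have "6 * ((n - 3) choose 3) = (n - 3) * (n - 4) * (n - 5)"
    using six_times_choose_three[of "n - 3"] by (simp add: diff_diff_add)
  then have six: "real ((n - 3) * (n - 4) * (n - 5)) = 6 * real ((n - 3) choose 3)"
    by (metis of_nat_mult of_nat_numeral)
  have "real (q - 1) = x" "x \<noteq> 0"
    using assms by (auto simp: x_def of_nat_diff)
  then show ?thesis
    unfolding six x_def[symmetric] by (simp add: power2_eq_square power3_eq_cube)
qed

theorem mainTheorem11: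
  fixes alpha u :: "nat \<Rightarrow> 'a::{finite,field}" and n :: nat
  assumes "6 \<le> n" and "n \<le> CARD('a)"
    and "inj_on alpha {0..<n}"
    and "\<forall>i<n. u i \<noteq> 0"
  shows "real (card {e \<in> vecs n. hamming_weight n e = 3 \<and>
            (\<exists>e' \<in> vecs n. e' \<noteq> e \<and> hamming_weight n e' \<le> 3 \<and>
               syndrome n alpha u e' = syndrome n alpha u e)})
         \<le> (real ((n - 3) * (n - 4) * (n - 5)) / (6 * (real CARD('a) - 1)^2))
            * (real CARD('a) - 1)^3 * real (n choose 3)"
proof -
  have "{e \<in> vecs n. hamming_weight n e = 3 \<and>
            (\<exists>e' \<in> vecs n. e' \<noteq> e \<and> hamming_weight n e' \<le> 3 \<and>
               syndrome n alpha u e' = syndrome n alpha u e)}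
      = {e \<in> vecs n. hamming_weight n e = 3 \<and> (\<exists>e'. confusable n alpha u e e')}"
    by (auto simp: confusable_def)
  moreover have "1 < CARD('a)" using assms(1,2) by simp
  ultimately show ?thesis
    using card_confusable_le[OF assms(3,4)] by (simp only: choose_bound_eq[symmetric] of_nat_le_iff)
qed

end
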